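(* Let $b$ be a prime, $m\ge 5$ an integer, $N=b^m$, let $(\gamma_j)_{j\ge1}$ be a non-increasing sequence of weights with $0<\gamma_j\le 1$, and let $0\le w_1\le w_2\le\cdots$ be integers. Then there exists a generating vector $\mathbf{z}=(b^{w_1}z_1,\dots,b^{w_s}z_s)$ with $z_j\in\mathcal{Z}_{N,w_j}$ for all $j\in[s]$ such that the lattice point set $P_N(\mathbf{z})$ satisfies \begin{align*} D_{N,\boldsymbol{\gamma}}^*(\mathbf{z}) &\le \sum_{\mathfrak{u}\subseteq[s]}\gamma_{\mathfrak{u}}\left(1-\left(1-\frac1N\right)^{|\mathfrak{u}|}\right) + \frac12\Bigg(\frac1N\prod_{j=1}^s(\beta_j+\gamma_jS_N) \\ &\quad + \frac1N\sum_{p=0}^{m-1} b^{m-p-1}(b-1)\prod_{\substack{j=1\\ w_j\ge m-p}}^{s}(\beta_j+\gamma_jS_N)\prod_{\substack{j=1\\ w_j<m-p}}^{s}\beta_j - \prod_{j=1}^s\beta_j\Bigg), \end{align*} where $\beta_j=1+\gamma_j$.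
   Context: Notation: $[s]=\{1,\dots,s\}$. Product weights: $\gamma_{\mathfrak{u}}=\prod_{j\in\mathfrak{u}}\gamma_j$ for $\mathfrak{u}\subseteq[s]$, $\gamma_\emptyset=1$. For an integer $w\ge0$, $\mathcal{Z}_{N,w}=\{z\in\{1,\dots,b^{m-w}-1\}:\gcd(z,b^m)=1\}$ if $w<m$, and $\mathcal{Z}_{N,w}=\{1\}$ if $w\ge m$. For $\mathbf{z}\in\mathbb{Z}^s$ the lattice point set is $P_N(\mathbf{z})=\{\{k\mathbf{z}/N\}:k=0,\dots,N-1\}$ (fractional parts componentwise). For a point set $P_N$ of $N$ points in $[0,1)^s$ and $\mathbf{x}\in[0,1]^s$, $\mathrm{discr}(\mathbf{x},P_N)=\frac1N\#\{\mathbf{p}\in P_N:\mathbf{p}\in[\mathbf{0},\mathbf{x})\}-\prod_{j=1}^s x_j$. The weighted star discrepancy is $D^*_{N,\boldsymbol\gamma}(\mathbf{z})=\sup_{\mathbf{x}\in(0,1]^s}\max_{\emptyset\ne\mathfrak{u}\subseteq[s]}\gamma_{\mathfrak{u}}|\mathrm{discr}((\mathbf{x}_{\mathfrak{u}},\mathbf{1}),P_N(\mathbf{z}))|$, where $(\mathbf{x}_{\mathfrak{u}},\mathbf{1})$ has $j$-th coordinate $x_j$ for $j\in\mathfrak{u}$ and $1$ otherwise. $S_N=\sum_{-N/2<h\le N/2,\,h\ne0}\frac{1}{|h|}$. *)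

theory Defs
  imports "HOL-Analysis.Analysis"
begin

definition prod_weight :: "(nat \<Rightarrow> real) \<Rightarrow> nat set \<Rightarrow> real" where
  "prod_weight \<gamma> u = (\<Prod>j\<in>u. \<gamma> j)"

definition Zset :: "nat \<Rightarrow> nat \<Rightarrow> nat \<Rightarrow> nat set" where
  "Zset b m w = (if w < m then {z \<in> {1..b ^ (m - w) - 1}. coprime z (b ^ m)} else {1})"

text \<open>Local discrepancy of the lattice point set P_N(z) (points counted with
  multiplicity, k = 0..N-1) at the box [0,x) in dimension s (coordinates 1..s).\<close>
definition discr :: "nat \<Rightarrow> nat \<Rightarrow> (nat \<Rightarrow> nat) \<Rightarrow> (nat \<Rightarrow> real) \<Rightarrow> real" where
  "discr N s z x =
     real (card {k \<in> {0..<N}. \<forall>j\<in>{1..s}. frac (real k * real (z j) / real N) < x j}) / real N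
     - (\<Prod>j\<in>{1..s}. x j)"

definition weighted_star_discr :: "nat \<Rightarrow> nat \<Rightarrow> (nat \<Rightarrow> real) \<Rightarrow> (nat \<Rightarrow> nat) \<Rightarrow> real" where
  "weighted_star_discr N s \<gamma> z =
     Sup {prod_weight \<gamma> u * \<bar>discr N s z (\<lambda>j. if j \<in> u then x j else 1)\<bar> | x u.
            (\<forall>j\<in>{1..s}. 0 < x j \<and> x j \<le> 1) \<and> u \<subseteq> {1..s} \<and> u \<noteq> {}}"

definition S_N :: "nat \<Rightarrow> real" where
  "S_N N = (\<Sum>h\<in>{h::int. - real N / 2 < real_of_int h \<and> real_of_int h \<le> real N / 2 \<and> h \<noteq> 0}.
              1 / real_of_int \<bar>h\<bar>)"

end

theory Submission
  imports Defs
begin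

text \<open>
  Enlarging a box \<open>[0,x)\<close> to the grid \<open>N\<^sup>-\<^sup>1 \<int>\<^sup>s\<close> changes its volume by at most
  \<open>1 - (1 - 1/N)\<^bsup>|u|\<^esup>\<close>. The number of lattice points in a grid box is expanded in a
  discrete Fourier series over the centred residues \<open>-N/2 < h \<le> N/2\<close>: the zero frequency gives
  the volume, only frequencies in the dual lattice survive, and the Fourier coefficients of an interval
  are at most \<open>1/(2|h|)\<close> by Jordan's inequality. Hence the weighted star discrepancy is at most
  \<open>\<Sum>\<^sub>u \<gamma>\<^sub>u (1 - (1 - 1/N)\<^bsup>|u|\<^esup>) + (R - \<Prod>\<^sub>j (1 + \<gamma>\<^sub>j)) / 2\<close>, where \<open>R\<close> sums the
  weights \<open>r(h)\<close> over the dual lattice. Averaging \<open>R\<close> over all admissible generating vectors turns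
  the sum over each \<open>z\<^sub>j\<close> into a Ramanujan-type sum depending only on the \<open>b\<close>-adic valuation of
  the frequency; evaluating these sums and grouping frequencies by valuation bounds the average, and
  some generating vector is at most the average.
\<close>

section \<open>Additive characters and centred residues\<close>

definition cis2pi :: "real \<Rightarrow> complex" where
  "cis2pi x = cis (2 * pi * x)"

lemma cis2pi_add: "cis2pi (x + y) = cis2pi x * cis2pi y"
  by (simp add: cis2pi_def cis_mult distrib_left)

lemma cis2pi_of_int [simp]: "cis2pi (of_int k) = 1"
  by (simp add: cis2pi_def)

lemma cis2pi_0 [simp]: "cis2pi 0 = 1"
  by (simp add: cis2pi_def)

lemma norm_cis2pi [simp]: "norm (cis2pi x) = 1"
  by (simp add: cis2pi_def)

lemma cis2pi_add_of_int: "cis2pi (x + of_int k) = cis2pi x"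
  by (simp add: cis2pi_add)

lemma cis2pi_power: "cis2pi x ^ n = cis2pi (real n * x)"
  unfolding cis2pi_def Complex.DeMoivre by (simp add: algebra_simps)

lemma prod_cis2pi: "finite I \<Longrightarrow> (\<Prod>j\<in>I. cis2pi (x j)) = cis2pi (\<Sum>j\<in>I. x j)"
  by (induction I rule: finite_induct) (auto simp: cis2pi_add)

lemma norm_cis2pi_minus_1: "norm (cis2pi x - 1) = 2 * \<bar>sin (pi * x)\<bar>"
  using dist_exp_i_1[of "2 * pi * x"] by (simp add: cis2pi_def cis_conv_exp)

lemma cis2pi_eq_1_iff: "cis2pi x = 1 \<longleftrightarrow> x \<in> \<int>"
proof
  assume "cis2pi x = 1"
  then have "cos (2 * pi * x) = 1"
    unfolding cis2pi_def by (metis cis.sel(1) one_complex.sel(1))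
  then obtain n :: int where "2 * pi * x = of_int n * 2 * pi"
    using cos_one_2pi_int by auto
  then show "x \<in> \<int>" by simp
qed (auto simp: cis2pi_def elim: Ints_cases)

lemma cis2pi_divide_eq_1_iff:
  assumes "n > 0"
  shows "cis2pi (of_int d / real n) = 1 \<longleftrightarrow> int n dvd d"
proof -
  have "of_int d / real n \<in> \<int> \<longleftrightarrow> int n dvd d"
  proof
    assume "of_int d / real n \<in> \<int>"
    then obtain q where "of_int d / real n = of_int q" by (elim Ints_cases)
    then have "of_int d = real n * of_int q" using assms by (simp add: field_simps)
    then have "d = int n * q" by (metis of_int_eq_iff of_int_mult of_int_of_nat_eq)
    then show "int n dvd d" by simp
  qed (use assms in auto)
  then show ?thesis by (simp add: cis2pi_eq_1_iff)
qed

lemma sum_cis2pi_roots_of_unity: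
  assumes "n > 0"
  shows "(\<Sum>r<n. cis2pi (real r * of_int d / real n)) = (if int n dvd d then of_nat n else 0)"
proof -
  define \<omega> where "\<omega> = cis2pi (of_int d / real n)"
  have powers: "cis2pi (real r * of_int d / real n) = \<omega> ^ r" for r
    by (simp add: \<omega>_def cis2pi_power)
  show ?thesis
  proof (cases "int n dvd d")
    case True
    then have "\<omega> = 1" using assms by (simp add: \<omega>_def cis2pi_divide_eq_1_iff)
    then show ?thesis using True by (simp add: powers)
  next
    case False
    then have "\<omega> \<noteq> 1" using assms by (simp add: \<omega>_def cis2pi_divide_eq_1_iff)
    moreover have "\<omega> ^ n = 1" using assms by (simp add: \<omega>_def cis2pi_power)
    ultimately show ?thesis using False by (simp add: powers geometric_sum)
  qed
qed

definition centred_residues :: "nat \<Rightarrow> int set" where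
  "centred_residues n = {h. - int n < 2 * h \<and> 2 * h \<le> int n}"

lemma finite_centred_residues [simp]: "finite (centred_residues n)"
  by (rule finite_subset[of _ "{- int n..int n}"]) (auto simp: centred_residues_def)

lemma zero_in_centred_residues: "n > 0 \<Longrightarrow> 0 \<in> centred_residues n"
  by (simp add: centred_residues_def)

lemma abs_centred_residue_le: "h \<in> centred_residues n \<Longrightarrow> 2 * \<bar>h\<bar> \<le> int n"
  by (auto simp: centred_residues_def)

lemma centred_residue_eq_0_if_dvd:
  assumes "h \<in> centred_residues n" "int n dvd h"
  shows "h = 0"
proof (rule ccontr)
  assume "h \<noteq> 0"
  obtain q where q: "h = int n * q" using assms(2) by blast
  with \<open>h \<noteq> 0\<close> have "int n \<le> \<bar>h\<bar>" "n > 0" by (auto simp: abs_mult)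
  then show False using assms(1) by (auto simp: centred_residues_def)
qed

lemma bij_betw_mod_centred_residues:
  assumes "n > 0"
  shows "bij_betw (\<lambda>h. nat (h mod int n)) (centred_residues n) {..<n}"
proof -
  define lift where "lift r = (if 2 * r \<le> n then int r else int r - int n)" for r
  have "lift (nat (h mod int n)) = h" if "h \<in> centred_residues n" for h
  proof (cases "h \<ge> 0")
    case True
    then have "h mod int n = h" using that by (intro mod_pos_pos_trivial) (auto simp: centred_residues_def)
    then show ?thesis using True that by (auto simp: lift_def centred_residues_def)
  next
    case False
    have "(h + int n) mod int n = h + int n"
      using that False by (intro mod_pos_pos_trivial) (auto simp: centred_residues_def)
    then have "h mod int n = h + int n" by simp
    then show ?thesis using False that by (auto simp: lift_def centred_residues_def)
  qed
  moreover have "nat (lift r mod int n) = r" if "r < n" for r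
    using that by (auto simp: lift_def mod_pos_pos_trivial)
  moreover have "lift ` {..<n} \<subseteq> centred_residues n"
    by (auto simp: lift_def centred_residues_def)
  ultimately show ?thesis
    using assms by (intro bij_betw_byWitness[where f' = lift]) (auto simp: nat_less_iff)
qed

lemma card_centred_residues: "n > 0 \<Longrightarrow> card (centred_residues n) = n"
  using bij_betw_same_card[OF bij_betw_mod_centred_residues] by simp

lemma sum_centred_residues_cis2pi:
  assumes "n > 0"
  shows "(\<Sum>h\<in>centred_residues n. cis2pi (of_int h * of_int d / real n))
    = (if int n dvd d then of_nat n else 0)"
proof -
  have periodic: "cis2pi (of_int h * of_int d / real n) = cis2pi (real (nat (h mod int n)) * of_int d / real n)" for h
  proof -
    have "real_of_int h = of_int (h mod int n) + real n * of_int (h div int n)"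
      by (metis div_mult_mod_eq add.commute mult.commute of_int_add of_int_mult of_int_of_nat_eq)
    then have "of_int h * of_int d / real n
        = real (nat (h mod int n)) * of_int d / real n + of_int (h div int n * d)"
      using assms by (simp add: field_simps)
    then show ?thesis
      using cis2pi_add_of_int[of "real (nat (h mod int n)) * of_int d / real n" "h div int n * d"] by simp
  qed
  show ?thesis
    unfolding periodic sum.reindex_bij_betw[OF bij_betw_mod_centred_residues[OF assms],
      of "\<lambda>r. cis2pi (real r * of_int d / real n)"]
    by (rule sum_cis2pi_roots_of_unity[OF assms])
qed

lemma S_N_eq_sum_centred_residues:
  "S_N n = (\<Sum>h\<in>centred_residues n - {0}. 1 / real_of_int \<bar>h\<bar>)"
proof -
  have "- real n / 2 < real_of_int h \<and> real_of_int h \<le> real n / 2 \<longleftrightarrow> h \<in> centred_residues n" for h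
    unfolding centred_residues_def mem_Collect_eq by linarith
  then show ?thesis unfolding S_N_def by (intro sum.cong) auto
qed

lemma S_N_nonneg: "0 \<le> S_N n"
  unfolding S_N_eq_sum_centred_residues by (intro sum_nonneg) auto

lemma centred_residues_mono: "n \<le> n' \<Longrightarrow> centred_residues n \<subseteq> centred_residues n'"
  by (auto simp: centred_residues_def)

lemma S_N_mono: "n \<le> n' \<Longrightarrow> S_N n \<le> S_N n'"
  unfolding S_N_eq_sum_centred_residues using centred_residues_mono by (intro sum_mono2) auto

lemma S_N_mult_diff_le:
  assumes "b \<ge> 1" "n \<ge> 1"
  shows "S_N (b * n) - S_N n \<le> 2 * (real b - 1)"
proof -
  have sub: "centred_residues n \<subseteq> centred_residues (b * n)"
    using assms by (intro centred_residues_mono) simp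
  have "S_N (b * n) - S_N n
      = (\<Sum>h\<in>(centred_residues (b * n) - {0}) - (centred_residues n - {0}). 1 / real_of_int \<bar>h\<bar>)"
    unfolding S_N_eq_sum_centred_residues using sub by (subst sum_diff) auto
  also have "(centred_residues (b * n) - {0}) - (centred_residues n - {0})
      = centred_residues (b * n) - centred_residues n"
    using zero_in_centred_residues[of n] assms by auto
  also have "(\<Sum>h\<in>centred_residues (b * n) - centred_residues n. 1 / real_of_int \<bar>h\<bar>)
      \<le> (\<Sum>h\<in>centred_residues (b * n) - centred_residues n. 2 / real n)"
  proof (rule sum_mono)
    fix h assume "h \<in> centred_residues (b * n) - centred_residues n"
    then have "int n \<le> 2 * \<bar>h\<bar>" by (auto simp: centred_residues_def)
    then have "real n \<le> 2 * real_of_int \<bar>h\<bar>" by linarith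
    then show "1 / real_of_int \<bar>h\<bar> \<le> 2 / real n" using assms by (simp add: field_simps)
  qed
  also have "\<dots> = real (b * n - n) * (2 / real n)"
    using card_Diff_subset[OF finite_centred_residues sub] assms by (simp add: card_centred_residues)
  also have "\<dots> = 2 * (real b - 1)"
    using assms by (simp add: of_nat_diff field_simps)
  finally show ?thesis .
qed

lemma sum_inverse_abs_centred_multiples:
  assumes "d > 0"
  shows "(\<Sum>h\<in>{h \<in> centred_residues (d * n) - {0}. int d dvd h}. 1 / real_of_int \<bar>h\<bar>) = S_N n / real d"
proof -
  have scaled: "int d * g \<in> centred_residues (d * n) \<longleftrightarrow> g \<in> centred_residues n" for g
  proof -
    have d: "int d > 0" using assms by simp
    have "- int (d * n) < 2 * (int d * g) \<longleftrightarrow> int d * (- int n) < int d * (2 * g)"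
      by (simp add: algebra_simps)
    also have "\<dots> \<longleftrightarrow> - int n < 2 * g" by (rule mult_less_cancel_left_pos[OF d])
    moreover have "2 * (int d * g) \<le> int (d * n) \<longleftrightarrow> int d * (2 * g) \<le> int d * int n"
      by (simp add: algebra_simps)
    moreover have "\<dots> \<longleftrightarrow> 2 * g \<le> int n" by (rule mult_le_cancel_left_pos[OF d])
    ultimately show ?thesis by (simp add: centred_residues_def)
  qed
  have "{h \<in> centred_residues (d * n) - {0}. int d dvd h} = (\<lambda>g. int d * g) ` (centred_residues n - {0})"
  proof (intro equalityI subsetI)
    fix h assume "h \<in> {h \<in> centred_residues (d * n) - {0}. int d dvd h}"
    then obtain g where "h = int d * g" "int d * g \<in> centred_residues (d * n)" "int d * g \<noteq> 0" by auto
    then show "h \<in> (\<lambda>g. int d * g) ` (centred_residues n - {0})" by (auto simp: scaled)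
  qed (use assms in \<open>auto simp: scaled\<close>)
  moreover have "inj_on (\<lambda>g. int d * g) (centred_residues n - {0})"
    using assms by (auto simp: inj_on_def)
  ultimately show ?thesis
    unfolding S_N_eq_sum_centred_residues using assms
    by (simp add: sum.reindex sum_divide_distrib abs_mult mult.commute)
qed

section \<open>Fourier expansion of lattice point counts\<close>

lemma sin_ge_chord:
  assumes "0 \<le> t" "t \<le> pi / 2"
  shows "2 / pi * t \<le> sin t"
proof -
  have "convex_on {0..pi / 2} (\<lambda>t. - sin t)"
    by (rule convex_on_realI[where f' = "\<lambda>t. - cos t"])
      (auto intro!: derivative_eq_intros cos_monotone_0_pi_le)
  then have "concave_on {0..pi / 2} sin"
    by (simp add: concave_on_def)
  from concave_onD_Icc'[OF this, of t] assms show ?thesis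
    by simp
qed

lemma jordan_inequality:
  assumes "\<bar>x\<bar> \<le> 1 / 2"
  shows "2 * \<bar>x\<bar> \<le> \<bar>sin (pi * x)\<bar>"
proof -
  have "2 * \<bar>x\<bar> \<le> sin (pi * \<bar>x\<bar>)"
    using sin_ge_chord[of "pi * \<bar>x\<bar>"] assms by simp
  also have "\<dots> \<le> \<bar>sin (pi * \<bar>x\<bar>)\<bar>" by simp
  also have "\<dots> = \<bar>sin (pi * x)\<bar>" by (cases "x \<ge> 0") auto
  finally show ?thesis .
qed

text \<open>The discrete Fourier coefficient of the indicator of \<open>{0, \<dots>, a - 1}\<close> in \<open>\<int>/N\<close>.\<close>
definition interval_fourier_coeff :: "nat \<Rightarrow> nat \<Rightarrow> int \<Rightarrow> complex" where
  "interval_fourier_coeff N a h = 1 / of_nat N * (\<Sum>r<a. cis2pi (- (of_int h * real r) / real N))"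

lemma interval_fourier_coeff_0: "interval_fourier_coeff N a 0 = of_nat a / of_nat N"
  by (simp add: interval_fourier_coeff_def)

lemma interval_fourier_coeff_full:
  assumes "N > 0" "h \<in> centred_residues N" "h \<noteq> 0"
  shows "interval_fourier_coeff N N h = 0"
proof -
  have "(\<Sum>r<N. cis2pi (- (of_int h * real r) / real N)) = (\<Sum>r<N. cis2pi (real r * of_int (- h) / real N))"
    by (simp add: algebra_simps)
  also have "\<dots> = 0"
    unfolding sum_cis2pi_roots_of_unity[OF assms(1)]
    using centred_residue_eq_0_if_dvd[OF assms(2)] assms(3) by auto
  finally show ?thesis by (simp add: interval_fourier_coeff_def)
qed

lemma norm_interval_fourier_coeff_le:
  assumes N: "N > 0" and h: "h \<in> centred_residues N" "h \<noteq> 0"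
  shows "norm (interval_fourier_coeff N a h) \<le> 1 / (2 * \<bar>of_int h\<bar>)"
proof -
  define \<omega> where "\<omega> = cis2pi (of_int (- h) / real N)"
  have powers: "cis2pi (- (of_int h * real r) / real N) = \<omega> ^ r" for r
    by (simp add: \<omega>_def cis2pi_power mult.commute)
  have "\<omega> \<noteq> 1"
    unfolding \<omega>_def cis2pi_divide_eq_1_iff[OF N] using centred_residue_eq_0_if_dvd[OF h(1)] h(2) by auto
  have hN: "2 * \<bar>of_int h\<bar> \<le> real N"
    using abs_centred_residue_le[OF h(1)] by linarith
  have "4 * \<bar>of_int h\<bar> / real N = 2 * (2 * \<bar>- of_int h / real N\<bar>)"
    using N by simp
  also have "\<dots> \<le> norm (\<omega> - 1)"
    unfolding \<omega>_def norm_cis2pi_minus_1 using jordan_inequality[of "- of_int h / real N"] hN N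
    by (simp add: field_simps)
  finally have lower: "4 * \<bar>of_int h\<bar> / real N \<le> norm (\<omega> - 1)" .
  have "norm (\<omega> ^ a - 1) \<le> norm (\<omega> ^ a) + norm (1 :: complex)"
    by (rule norm_triangle_ineq4)
  then have upper: "norm (\<omega> ^ a - 1) \<le> 2"
    by (simp add: \<omega>_def norm_power)
  have "(\<Sum>r<a. cis2pi (- (of_int h * real r) / real N)) = (\<omega> ^ a - 1) / (\<omega> - 1)"
    unfolding powers using \<open>\<omega> \<noteq> 1\<close> by (rule geometric_sum)
  then have "norm (interval_fourier_coeff N a h) = norm (\<omega> ^ a - 1) / norm (\<omega> - 1) / real N"
    by (simp add: interval_fourier_coeff_def norm_divide norm_mult)
  also have "\<dots> \<le> 2 / (4 * \<bar>of_int h\<bar> / real N) / real N"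
    using lower upper h(2) N by (intro divide_right_mono frac_le) auto
  also have "\<dots> = 1 / (2 * \<bar>of_int h\<bar>)"
    using N by (simp add: field_simps)
  finally show ?thesis .
qed

lemma interval_fourier_inversion:
  assumes N: "N > 0" and "t < N" "a \<le> N"
  shows "(\<Sum>h\<in>centred_residues N. interval_fourier_coeff N a h * cis2pi (of_int h * real t / real N))
    = (if t < a then 1 else 0)"
proof -
  have "(\<Sum>h\<in>centred_residues N. interval_fourier_coeff N a h * cis2pi (of_int h * real t / real N))
      = 1 / of_nat N * (\<Sum>r<a. \<Sum>h\<in>centred_residues N. cis2pi (of_int h * of_int (int t - int r) / real N))"
  proof -
    have "cis2pi (- (of_int h * real r) / real N) * cis2pi (of_int h * real t / real N)
        = cis2pi (of_int h * of_int (int t - int r) / real N)" for h r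
      by (simp add: algebra_simps diff_divide_distrib flip: cis2pi_add)
    then have "interval_fourier_coeff N a h * cis2pi (of_int h * real t / real N)
        = 1 / of_nat N * (\<Sum>r<a. cis2pi (of_int h * of_int (int t - int r) / real N))" for h
      by (simp add: interval_fourier_coeff_def sum_distrib_right)
    then show ?thesis
      by (simp only: sum_distrib_left[symmetric]) (subst sum.swap, rule refl)
  qed
  also have "\<dots> = 1 / of_nat N * (\<Sum>r<a. if r = t then of_nat N else 0)"
  proof -
    have "int N dvd (int t - int r) \<longleftrightarrow> r = t" if "r < a" for r
    proof
      assume "int N dvd (int t - int r)"
      then obtain q where q: "int t - int r = int N * q" by blast
      have "\<bar>int t - int r\<bar> < int N" using assms that by auto
      then have "q = 0" using q N by (cases "q = 0") (auto simp: abs_mult)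
      then show "r = t" using q by simp
    qed simp
    then have "(\<Sum>h\<in>centred_residues N. cis2pi (of_int h * of_int (int t - int r) / real N))
        = (if r = t then of_nat N else 0)" if "r < a" for r
      using sum_centred_residues_cis2pi[OF N, of "int t - int r"] that by simp
    then show ?thesis by simp
  qed
  also have "\<dots> = (if t < a then 1 else 0)"
    using N by (simp add: sum.delta)
  finally show ?thesis .
qed

definition in_dual_lattice :: "nat \<Rightarrow> nat set \<Rightarrow> (nat \<Rightarrow> nat) \<Rightarrow> (nat \<Rightarrow> int) \<Rightarrow> bool" where
  "in_dual_lattice N I v H \<longleftrightarrow> int N dvd (\<Sum>j\<in>I. H j * int (v j))"

lemma sum_dual_lattice_eq_character_sum:
  fixes f :: "nat \<Rightarrow> int \<Rightarrow> complex"
  assumes N: "N > 0" and I: "finite I"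
  shows "(\<Sum>H\<in>PiE I (\<lambda>_. centred_residues N). of_bool (in_dual_lattice N I v H) * (\<Prod>j\<in>I. f j (H j)))
    = 1 / of_nat N * (\<Sum>k<N. \<Prod>j\<in>I. \<Sum>h\<in>centred_residues N.
        f j h * cis2pi (of_int h * real k * real (v j) / real N))"
proof -
  have char: "(\<Prod>j\<in>I. f j (H j) * cis2pi (of_int (H j) * real k * real (v j) / real N))
      = (\<Prod>j\<in>I. f j (H j)) * cis2pi (real k * of_int (\<Sum>j\<in>I. H j * int (v j)) / real N)" for H k
    using I by (simp add: prod.distrib prod_cis2pi sum_distrib_left sum_divide_distrib algebra_simps)
  have "(\<Sum>k<N. \<Prod>j\<in>I. \<Sum>h\<in>centred_residues N. f j h * cis2pi (of_int h * real k * real (v j) / real N))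
      = (\<Sum>k<N. \<Sum>H\<in>PiE I (\<lambda>_. centred_residues N).
          (\<Prod>j\<in>I. f j (H j)) * cis2pi (real k * of_int (\<Sum>j\<in>I. H j * int (v j)) / real N))"
    using I by (simp add: prod_sum_PiE char)
  also have "\<dots> = (\<Sum>H\<in>PiE I (\<lambda>_. centred_residues N). (\<Prod>j\<in>I. f j (H j)) *
      (\<Sum>k<N. cis2pi (real k * of_int (\<Sum>j\<in>I. H j * int (v j)) / real N)))"
    by (subst sum.swap) (simp add: sum_distrib_left)
  also have "\<dots> = (\<Sum>H\<in>PiE I (\<lambda>_. centred_residues N).
      of_nat N * (of_bool (in_dual_lattice N I v H) * (\<Prod>j\<in>I. f j (H j))))"
    unfolding sum_cis2pi_roots_of_unity[OF N] in_dual_lattice_def by (intro sum.cong) auto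
  also have "\<dots> = of_nat N * (\<Sum>H\<in>PiE I (\<lambda>_. centred_residues N).
      of_bool (in_dual_lattice N I v H) * (\<Prod>j\<in>I. f j (H j)))"
    by (simp add: sum_distrib_left)
  finally show ?thesis using N by simp
qed

lemma prod_of_bool: "finite I \<Longrightarrow> (\<Prod>j\<in>I. of_bool (P j) :: 'a::comm_semiring_1) = of_bool (\<forall>j\<in>I. P j)"
  by (induction I rule: finite_induct) auto

lemma card_lattice_points_in_box:
  assumes N: "N > 0" and I: "finite I" and a: "\<And>j. j \<in> I \<Longrightarrow> a j \<le> N"
  shows "of_nat (card {k \<in> {0..<N}. \<forall>j\<in>I. (k * v j) mod N < a j}) / of_nat N
    = (\<Sum>H\<in>PiE I (\<lambda>_. centred_residues N).
        of_bool (in_dual_lattice N I v H) * (\<Prod>j\<in>I. interval_fourier_coeff N (a j) (H j)))"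
proof -
  have indicator: "(\<Sum>h\<in>centred_residues N. interval_fourier_coeff N (a j) h
        * cis2pi (of_int h * real k * real (v j) / real N))
      = of_bool ((k * v j) mod N < a j)" if "j \<in> I" for j k
  proof -
    have "of_int h * real k * real (v j) / real N
        = of_int h * real ((k * v j) mod N) / real N + of_int (h * int ((k * v j) div N))" for h
    proof -
      have "real k * real (v j) = real ((k * v j) mod N) + real N * real ((k * v j) div N)"
        by (metis mod_div_mult_eq mult.commute of_nat_add of_nat_mult)
      then show ?thesis using N by (simp add: field_simps)
    qed
    then show ?thesis
      using interval_fourier_inversion[OF N _ a[OF that], of "(k * v j) mod N"] N
      by (simp add: cis2pi_add_of_int del: of_int_mult)
  qed
  have "of_nat (card {k \<in> {0..<N}. \<forall>j\<in>I. (k * v j) mod N < a j})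
      = (\<Sum>k<N. \<Prod>j\<in>I. of_bool ((k * v j) mod N < a j) :: complex)"
    using I by (simp add: prod_of_bool atLeast0LessThan Int_def conj_commute)
  also have "\<dots> = (\<Sum>k<N. \<Prod>j\<in>I. \<Sum>h\<in>centred_residues N.
      interval_fourier_coeff N (a j) h * cis2pi (of_int h * real k * real (v j) / real N))"
    by (simp add: indicator)
  finally show ?thesis
    using sum_dual_lattice_eq_character_sum[OF N I, of v "\<lambda>j. interval_fourier_coeff N (a j)"] N
    by (simp add: divide_simps)
qed

section \<open>The weighted star discrepancy and the dual lattice\<close>

definition weight_r :: "(nat \<Rightarrow> real) \<Rightarrow> nat \<Rightarrow> int \<Rightarrow> real" where
  "weight_r \<gamma> j h = (if h = 0 then 1 + \<gamma> j else \<gamma> j / real_of_int \<bar>h\<bar>)"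

definition lattice_R :: "nat \<Rightarrow> nat set \<Rightarrow> (nat \<Rightarrow> nat) \<Rightarrow> (nat \<Rightarrow> real) \<Rightarrow> real" where
  "lattice_R N I v \<gamma> = (\<Sum>H\<in>PiE I (\<lambda>_. centred_residues N).
     of_bool (in_dual_lattice N I v H) * (\<Prod>j\<in>I. weight_r \<gamma> j (H j)))"

lemma lattice_R_eq_zero_term_plus:
  assumes "N > 0" "finite I"
  shows "lattice_R N I v \<gamma> = (\<Prod>j\<in>I. 1 + \<gamma> j)
    + (\<Sum>H\<in>PiE I (\<lambda>_. centred_residues N) - {restrict (\<lambda>_. 0) I}.
        of_bool (in_dual_lattice N I v H) * (\<Prod>j\<in>I. weight_r \<gamma> j (H j)))"
proof -
  have zero: "restrict (\<lambda>_. 0) I \<in> PiE I (\<lambda>_. centred_residues N)"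
    using zero_in_centred_residues[OF assms(1)] by auto
  have fin: "finite (PiE I (\<lambda>_. centred_residues N))"
    using assms(2) by (simp add: finite_PiE)
  show ?thesis
    unfolding lattice_R_def sum.remove[OF fin zero] by (simp add: in_dual_lattice_def weight_r_def)
qed

text \<open>\<open>q\<close> is the weight of coordinate \<open>j\<close>: \<open>\<gamma> j\<close>, or \<open>1\<close> when the box has full length \<open>N\<close> there.\<close>
lemma weighted_norm_interval_fourier_coeff_le:
  assumes N: "N > 0" "a \<le> N" and h: "h \<in> centred_residues N"
    and \<gamma>: "0 < \<gamma> j" "\<gamma> j \<le> 1" and q: "q = \<gamma> j \<or> (q = 1 \<and> a = N)"
  shows "q * norm (interval_fourier_coeff N a h)
    \<le> (if h = 0 then weight_r \<gamma> j h else weight_r \<gamma> j h / 2)"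
proof (cases "h = 0")
  case True
  have "norm (interval_fourier_coeff N a h) \<le> 1"
    using True N by (simp add: interval_fourier_coeff_0 norm_divide)
  then have "q * norm (interval_fourier_coeff N a h) \<le> 1"
    using q \<gamma> by (metis mult_le_one norm_ge_zero order_less_imp_le mult_1)
  then show ?thesis using True \<gamma> by (simp add: weight_r_def)
next
  case False
  show ?thesis
    using q
  proof
    assume "q = \<gamma> j"
    then show ?thesis
      using mult_left_mono[OF norm_interval_fourier_coeff_le[OF N(1) h False, of a], of "\<gamma> j"] \<gamma> False
      by (simp add: weight_r_def)
  next
    assume "q = 1 \<and> a = N"
    then show ?thesis
      using interval_fourier_coeff_full[OF N(1) h False] \<gamma> False by (simp add: weight_r_def)
  qed
qed

lemma prod_le_half_prod:
  fixes f g :: "'a \<Rightarrow> real"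
  assumes "finite I" "\<And>j. j \<in> I \<Longrightarrow> 0 \<le> f j \<and> f j \<le> g j" "j0 \<in> I" "f j0 \<le> g j0 / 2"
  shows "(\<Prod>j\<in>I. f j) \<le> (\<Prod>j\<in>I. g j) / 2"
proof -
  have "(\<Prod>j\<in>I. f j) = f j0 * (\<Prod>j\<in>I - {j0}. f j)"
    using assms by (simp add: prod.remove)
  also have "\<dots> \<le> (g j0 / 2) * (\<Prod>j\<in>I - {j0}. g j)"
    using assms by (intro mult_mono prod_mono prod_nonneg) force+
  also have "\<dots> = (\<Prod>j\<in>I. g j) / 2"
    using assms by (simp add: prod.remove)
  finally show ?thesis .
qed

lemma card_lattice_points_in_box_minus_volume:
  assumes N: "N > 0" and I: "finite I" and a: "\<And>j. j \<in> I \<Longrightarrow> a j \<le> N"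
  shows "of_real (real (card {k \<in> {0..<N}. \<forall>j\<in>I. (k * v j) mod N < a j}) / real N
      - (\<Prod>j\<in>I. real (a j) / real N))
    = (\<Sum>H\<in>PiE I (\<lambda>_. centred_residues N) - {restrict (\<lambda>_. 0) I}.
        of_bool (in_dual_lattice N I v H) * (\<Prod>j\<in>I. interval_fourier_coeff N (a j) (H j)))"
proof -
  define T where "T H = of_bool (in_dual_lattice N I v H)
    * (\<Prod>j\<in>I. interval_fourier_coeff N (a j) (H j))" for H
  have zero: "restrict (\<lambda>_. 0) I \<in> PiE I (\<lambda>_. centred_residues N)"
    using zero_in_centred_residues[OF N] by auto
  have fin: "finite (PiE I (\<lambda>_. centred_residues N))"
    using I by (simp add: finite_PiE)
  have "of_nat (card {k \<in> {0..<N}. \<forall>j\<in>I. (k * v j) mod N < a j}) / of_nat N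
      = (\<Sum>H\<in>PiE I (\<lambda>_. centred_residues N). T H)"
    unfolding T_def by (rule card_lattice_points_in_box[OF N I a])
  also have "\<dots> = T (restrict (\<lambda>_. 0) I) + (\<Sum>H\<in>PiE I (\<lambda>_. centred_residues N) - {restrict (\<lambda>_. 0) I}. T H)"
    by (rule sum.remove[OF fin zero])
  also have "T (restrict (\<lambda>_. 0) I) = of_real (\<Prod>j\<in>I. real (a j) / real N)"
    unfolding T_def in_dual_lattice_def by (simp add: interval_fourier_coeff_0)
  finally have "of_nat (card {k \<in> {0..<N}. \<forall>j\<in>I. (k * v j) mod N < a j}) / of_nat N
      = of_real (\<Prod>j\<in>I. real (a j) / real N)
        + (\<Sum>H\<in>PiE I (\<lambda>_. centred_residues N) - {restrict (\<lambda>_. 0) I}. T H)" .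
  then show ?thesis
    unfolding T_def[symmetric] of_real_diff of_real_divide of_real_of_nat_eq by simp
qed

lemma weighted_norm_prod_interval_fourier_coeff_le:
  assumes N: "N > 0" and I: "finite I" and u: "u \<subseteq> I"
    and \<gamma>: "\<And>j. j \<in> I \<Longrightarrow> 0 < \<gamma> j \<and> \<gamma> j \<le> 1"
    and a: "\<And>j. j \<in> I \<Longrightarrow> a j \<le> N" and full: "\<And>j. j \<in> I - u \<Longrightarrow> a j = N"
    and H: "H \<in> PiE I (\<lambda>_. centred_residues N)" "H \<noteq> restrict (\<lambda>_. 0) I"
  shows "prod_weight \<gamma> u * (\<Prod>j\<in>I. norm (interval_fourier_coeff N (a j) (H j)))
    \<le> (\<Prod>j\<in>I. weight_r \<gamma> j (H j)) / 2"
proof -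
  define q where "q j = (if j \<in> u then \<gamma> j else 1)" for j
  have q: "0 < q j" "q j = \<gamma> j \<or> (q j = 1 \<and> a j = N)" if "j \<in> I" for j
    using \<gamma>[OF that] full[of j] that by (auto simp: q_def)
  have HC: "H j \<in> centred_residues N" if "j \<in> I" for j
    using H(1) that by auto
  have factor: "q j * norm (interval_fourier_coeff N (a j) (H j))
      \<le> (if H j = 0 then weight_r \<gamma> j (H j) else weight_r \<gamma> j (H j) / 2)" if "j \<in> I" for j
    using weighted_norm_interval_fourier_coeff_le[OF N a[OF that] HC[OF that]] \<gamma>[OF that] q[OF that] by blast
  obtain j0 where j0: "j0 \<in> I" "H j0 \<noteq> 0"
    using H by (metis PiE_restrict restrict_ext)
  have "prod_weight \<gamma> u = (\<Prod>j\<in>I. q j)"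
    unfolding prod_weight_def q_def using I u by (simp add: prod.If_cases Int_absorb1)
  then have "prod_weight \<gamma> u * (\<Prod>j\<in>I. norm (interval_fourier_coeff N (a j) (H j)))
      = (\<Prod>j\<in>I. q j * norm (interval_fourier_coeff N (a j) (H j)))"
    by (simp add: prod.distrib)
  also have "\<dots> \<le> (\<Prod>j\<in>I. weight_r \<gamma> j (H j)) / 2"
  proof (rule prod_le_half_prod[OF I _ j0(1)])
    fix j assume j: "j \<in> I"
    have "0 \<le> weight_r \<gamma> j (H j)"
      using \<gamma>[OF j] by (simp add: weight_r_def)
    then show "0 \<le> q j * norm (interval_fourier_coeff N (a j) (H j))
        \<and> q j * norm (interval_fourier_coeff N (a j) (H j)) \<le> weight_r \<gamma> j (H j)"
      using factor[OF j] q(1)[OF j] by (auto split: if_splits)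
  next
    show "q j0 * norm (interval_fourier_coeff N (a j0) (H j0)) \<le> weight_r \<gamma> j0 (H j0) / 2"
      using factor[OF j0(1)] j0(2) by simp
  qed
  finally show ?thesis .
qed

lemma prod_weight_nonneg: "(\<And>j. j \<in> u \<Longrightarrow> 0 \<le> \<gamma> j) \<Longrightarrow> 0 \<le> prod_weight \<gamma> u"
  unfolding prod_weight_def by (rule prod_nonneg)

lemma weighted_box_count_error_le:
  assumes N: "N > 0" and I: "finite I" and u: "u \<subseteq> I"
    and \<gamma>: "\<And>j. j \<in> I \<Longrightarrow> 0 < \<gamma> j \<and> \<gamma> j \<le> 1"
    and a: "\<And>j. j \<in> I \<Longrightarrow> a j \<le> N" and full: "\<And>j. j \<in> I - u \<Longrightarrow> a j = N"
  shows "prod_weight \<gamma> u * \<bar>real (card {k \<in> {0..<N}. \<forall>j\<in>I. (k * v j) mod N < a j}) / real N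
      - (\<Prod>j\<in>I. real (a j) / real N)\<bar> \<le> 1 / 2 * (lattice_R N I v \<gamma> - (\<Prod>j\<in>I. 1 + \<gamma> j))"
proof -
  define P where "P = PiE I (\<lambda>_. centred_residues N) - {restrict (\<lambda>_. 0) I}"
  define T where "T H = of_bool (in_dual_lattice N I v H)
    * (\<Prod>j\<in>I. interval_fourier_coeff N (a j) (H j))" for H
  have weight_nonneg: "0 \<le> prod_weight \<gamma> u"
    using \<gamma> u by (intro prod_weight_nonneg) (auto simp: less_imp_le)
  have "of_real (real (card {k \<in> {0..<N}. \<forall>j\<in>I. (k * v j) mod N < a j}) / real N
      - (\<Prod>j\<in>I. real (a j) / real N)) = (\<Sum>H\<in>P. T H)"
    unfolding P_def T_def by (rule card_lattice_points_in_box_minus_volume[OF N I a])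
  then have "\<bar>real (card {k \<in> {0..<N}. \<forall>j\<in>I. (k * v j) mod N < a j}) / real N
      - (\<Prod>j\<in>I. real (a j) / real N)\<bar> \<le> (\<Sum>H\<in>P. norm (T H))"
    unfolding norm_of_real[where 'a = complex, symmetric] by (simp only:) (rule norm_sum)
  then have "prod_weight \<gamma> u * \<bar>real (card {k \<in> {0..<N}. \<forall>j\<in>I. (k * v j) mod N < a j}) / real N
      - (\<Prod>j\<in>I. real (a j) / real N)\<bar> \<le> (\<Sum>H\<in>P. prod_weight \<gamma> u * norm (T H))"
    using weight_nonneg by (simp add: mult_left_mono flip: sum_distrib_left)
  also have "\<dots> \<le> (\<Sum>H\<in>P. of_bool (in_dual_lattice N I v H) * (\<Prod>j\<in>I. weight_r \<gamma> j (H j)) / 2)"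
  proof (rule sum_mono)
    fix H assume "H \<in> P"
    then show "prod_weight \<gamma> u * norm (T H)
        \<le> of_bool (in_dual_lattice N I v H) * (\<Prod>j\<in>I. weight_r \<gamma> j (H j)) / 2"
      using weighted_norm_prod_interval_fourier_coeff_le[where \<gamma> = \<gamma> and H = H, OF N I u \<gamma> a full] weight_nonneg
      by (auto simp: P_def T_def prod_norm norm_mult)
  qed
  also have "\<dots> = 1 / 2 * (lattice_R N I v \<gamma> - (\<Prod>j\<in>I. 1 + \<gamma> j))"
    unfolding lattice_R_eq_zero_term_plus[OF N I] P_def by (simp add: sum_divide_distrib)
  finally show ?thesis .
qed

lemma frac_lt_iff_mod_lt_ceiling:
  assumes N: "N > 0" and x: "0 < x"
  shows "frac (real n / real N) < x \<longleftrightarrow> n mod N < nat \<lceil>real N * x\<rceil>"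
proof -
  have "real n / real N = real (n mod N) / real N + of_int (int (n div N))"
    using N by (simp add: field_simps) (metis mod_div_mult_eq mult.commute of_nat_add of_nat_mult)
  moreover have "real (n mod N) / real N < 1" using N by simp
  ultimately have "frac (real n / real N) = real (n mod N) / real N"
    by (simp add: frac_unique_iff del: of_int_of_nat_eq)
  then have "frac (real n / real N) < x \<longleftrightarrow> real (n mod N) < real N * x"
    using N by (simp add: divide_less_eq mult.commute)
  also have "\<dots> \<longleftrightarrow> int (n mod N) < \<lceil>real N * x\<rceil>" by (simp add: less_ceiling_iff)
  also have "\<dots> \<longleftrightarrow> n mod N < nat \<lceil>real N * x\<rceil>" by linarith
  finally show ?thesis .
qed

lemma prod_diff_le_one_minus_prod:
  fixes x y :: "'a \<Rightarrow> real"
  assumes "finite I" "\<And>j. j \<in> I \<Longrightarrow> 0 \<le> x j \<and> x j \<le> y j \<and> y j \<le> 1"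
  shows "(\<Prod>j\<in>I. y j) - (\<Prod>j\<in>I. x j) \<le> 1 - (\<Prod>j\<in>I. 1 - (y j - x j))"
  using assms
proof (induction I rule: finite_induct)
  case (insert i I)
  define D where "D = (\<Prod>j\<in>I. y j) - (\<Prod>j\<in>I. x j)"
  define P where "P = (\<Prod>j\<in>I. 1 - (y j - x j))"
  have IH: "D \<le> 1 - P" using insert by (simp add: D_def P_def)
  have xi: "0 \<le> x i" "x i \<le> y i" "y i \<le> 1" using insert by auto
  have "(\<Prod>j\<in>I. y j) \<le> 1" "P \<le> 1"
    using insert.prems unfolding P_def by (intro prod_le_1; force)+
  have "(\<Prod>j\<in>insert i I. y j) - (\<Prod>j\<in>insert i I. x j) = x i * D + (y i - x i) * (\<Prod>j\<in>I. y j)"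
    using insert by (simp add: D_def algebra_simps)
  also have "\<dots> \<le> x i * (1 - P) + (y i - x i) * 1"
    using IH xi \<open>(\<Prod>j\<in>I. y j) \<le> 1\<close> by (intro add_mono mult_left_mono) auto
  also have "\<dots> \<le> (1 - (y i - x i)) * (1 - P) + (y i - x i)"
    using xi \<open>P \<le> 1\<close> by (intro add_mono mult_right_mono) auto
  also have "\<dots> = 1 - (\<Prod>j\<in>insert i I. 1 - (y j - x j))"
    using insert by (simp add: P_def algebra_simps)
  finally show ?case .
qed simp

lemma prod_ceiling_gap:
  assumes N: "N > 0" and I: "finite I" and u: "u \<subseteq> I"
    and x: "\<And>j. j \<in> I \<Longrightarrow> 0 < x j \<and> x j \<le> 1" and x1: "\<And>j. j \<in> I - u \<Longrightarrow> x j = 1"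
  defines "y \<equiv> \<lambda>j. real (nat \<lceil>real N * x j\<rceil>) / real N"
  shows "(\<Prod>j\<in>I. x j) \<le> (\<Prod>j\<in>I. y j)"
    and "(\<Prod>j\<in>I. y j) - (\<Prod>j\<in>I. x j) \<le> 1 - (1 - 1 / real N) ^ card u"
proof -
  have xy: "0 \<le> x j \<and> x j \<le> y j \<and> y j \<le> 1 \<and> y j - x j \<le> 1 / real N" if "j \<in> I" for j
  proof -
    define c where "c = real (nat \<lceil>real N * x j\<rceil>)"
    have "real N * x j \<le> real N" using x[OF that] N by simp
    then have "c \<le> real N"
      unfolding c_def by (metis ceiling_mono ceiling_of_nat nat_le_iff of_nat_le_iff)
    moreover have "c = of_int \<lceil>real N * x j\<rceil>"
      using x[OF that] N by (simp add: c_def)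
    then have "real N * x j \<le> c" "c - real N * x j < 1"
      by linarith+
    moreover have y: "y j = c / real N" "y j - x j = (c - real N * x j) / real N"
      using N by (simp_all add: y_def c_def field_simps)
    ultimately have "x j \<le> y j" "y j \<le> 1" "y j - x j \<le> 1 / real N"
      using N by (simp_all add: le_divide_eq mult.commute divide_right_mono)
    then show ?thesis using x[OF that] by simp
  qed
  show "(\<Prod>j\<in>I. x j) \<le> (\<Prod>j\<in>I. y j)"
    using xy by (intro prod_mono) auto
  have "(\<Prod>j\<in>I. y j) - (\<Prod>j\<in>I. x j) \<le> 1 - (\<Prod>j\<in>I. 1 - (y j - x j))"
    using xy by (intro prod_diff_le_one_minus_prod I) auto
  also have "(\<Prod>j\<in>I. 1 - (y j - x j)) = (\<Prod>j\<in>u. 1 - (y j - x j))"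
    using u I x1 N by (intro prod.mono_neutral_right) (auto simp: y_def)
  also have "1 - (\<Prod>j\<in>u. 1 - (y j - x j)) \<le> 1 - (1 - 1 / real N) ^ card u"
    using xy u N prod_mono[of u "\<lambda>_. 1 - 1 / real N" "\<lambda>j. 1 - (y j - x j)"] by (force simp: field_simps)
  finally show "(\<Prod>j\<in>I. y j) - (\<Prod>j\<in>I. x j) \<le> 1 - (1 - 1 / real N) ^ card u" .
qed

lemma weighted_local_discr_le:
  assumes N: "N > 0" and u: "u \<subseteq> {1..s}"
    and \<gamma>: "\<And>j. j \<in> {1..s} \<Longrightarrow> 0 < \<gamma> j \<and> \<gamma> j \<le> 1"
    and x: "\<And>j. j \<in> {1..s} \<Longrightarrow> 0 < x j \<and> x j \<le> 1"
  shows "prod_weight \<gamma> u * \<bar>discr N s v (\<lambda>j. if j \<in> u then x j else 1)\<bar>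
    \<le> prod_weight \<gamma> u * (1 - (1 - 1 / real N) ^ card u)
      + 1 / 2 * (lattice_R N {1..s} v \<gamma> - (\<Prod>j\<in>{1..s}. 1 + \<gamma> j))"
proof -
  define x' where "x' j = (if j \<in> u then x j else 1)" for j
  define a where "a j = nat \<lceil>real N * x' j\<rceil>" for j
  define count where "count = real (card {k \<in> {0..<N}. \<forall>j\<in>{1..s}. (k * v j) mod N < a j}) / real N"
  have x': "0 < x' j \<and> x' j \<le> 1" if "j \<in> {1..s}" for j
    using x[OF that] by (simp add: x'_def)
  have a: "a j \<le> N" if "j \<in> {1..s}" for j
    using x'[OF that] N unfolding a_def by (simp add: ceiling_le_iff nat_le_iff)
  have full: "a j = N" if "j \<in> {1..s} - u" for j
    using that by (simp add: a_def x'_def)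
  have x'1: "x' j = 1" if "j \<in> {1..s} - u" for j
    using that by (simp add: x'_def)
  note gap = prod_ceiling_gap[where x = x', OF N finite_atLeastAtMost u x' x'1, folded a_def]
  have "discr N s v x' = count - (\<Prod>j\<in>{1..s}. x' j)"
    unfolding discr_def count_def a_def
    using frac_lt_iff_mod_lt_ceiling[OF N, of "x' _" "_ * v _"] x' by (simp cong: conj_cong)
  with gap have "\<bar>discr N s v x'\<bar>
      \<le> \<bar>count - (\<Prod>j\<in>{1..s}. real (a j) / real N)\<bar> + (1 - (1 - 1 / real N) ^ card u)"
    by linarith
  moreover have "0 \<le> prod_weight \<gamma> u"
    using \<gamma> u by (intro prod_weight_nonneg) (simp add: less_imp_le subset_iff)
  ultimately have "prod_weight \<gamma> u * \<bar>discr N s v x'\<bar>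
      \<le> prod_weight \<gamma> u * \<bar>count - (\<Prod>j\<in>{1..s}. real (a j) / real N)\<bar>
        + prod_weight \<gamma> u * (1 - (1 - 1 / real N) ^ card u)"
    by (simp add: mult_left_mono flip: distrib_left)
  moreover have "prod_weight \<gamma> u * \<bar>count - (\<Prod>j\<in>{1..s}. real (a j) / real N)\<bar>
      \<le> 1 / 2 * (lattice_R N {1..s} v \<gamma> - (\<Prod>j\<in>{1..s}. 1 + \<gamma> j))"
    unfolding count_def by (rule weighted_box_count_error_le[OF N _ u \<gamma> a full]) auto
  ultimately show ?thesis unfolding x'_def by linarith
qed

lemma weighted_star_discr_le:
  assumes "s \<ge> 1"
    and "\<And>x u. \<forall>j\<in>{1..s}. 0 < x j \<and> x j \<le> 1 \<Longrightarrow> u \<subseteq> {1..s} \<Longrightarrow> u \<noteq> {} \<Longrightarrow>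
      prod_weight \<gamma> u * \<bar>discr N s z (\<lambda>j. if j \<in> u then x j else 1)\<bar> \<le> B"
  shows "weighted_star_discr N s \<gamma> z \<le> B"
  unfolding weighted_star_discr_def
proof (rule cSup_least)
  show "{prod_weight \<gamma> u * \<bar>discr N s z (\<lambda>j. if j \<in> u then x j else 1)\<bar> | x u.
      (\<forall>j\<in>{1..s}. 0 < x j \<and> x j \<le> 1) \<and> u \<subseteq> {1..s} \<and> u \<noteq> {}} \<noteq> {}"
    using assms(1) by (auto intro!: exI[of _ "\<lambda>_. 1 :: real"] exI[of _ "{1}"])
qed (use assms(2) in blast)

lemma exists_le_average:
  fixes f :: "'a \<Rightarrow> real"
  assumes "finite S" "S \<noteq> {}"
  obtains x where "x \<in> S" "f x \<le> (\<Sum>y\<in>S. f y) / real (card S)"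
proof -
  obtain x where x: "x \<in> S" "\<And>y. y \<in> S \<Longrightarrow> f x \<le> f y"
    using arg_min_if_finite[OF assms, of f] by (meson not_le)
  then have "real (card S) * f x \<le> (\<Sum>y\<in>S. f y)"
    by (intro sum_bounded_below) auto
  then show ?thesis
    using that x(1) assms by (simp add: field_simps card_gt_0_iff)
qed

section \<open>Averaging over generating vectors\<close>

lemma Zset_eq_non_multiples:
  assumes "prime b" "w < m"
  shows "Zset b m w = {z \<in> {..<b ^ (m - w)}. \<not> b dvd z}"
proof -
  have b: "b > 1" using assms(1) prime_gt_1_nat by blast
  have "coprime z (b ^ m) \<longleftrightarrow> \<not> b dvd z" for z
    using assms by (simp add: coprime_commute)
      (meson prime_imp_coprime coprime_common_divisor dvd_refl not_prime_unit)
  moreover have "z \<in> {1..b ^ (m - w) - 1} \<longleftrightarrow> z \<noteq> 0 \<and> z < b ^ (m - w)" for z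
    using b by (auto simp: Suc_le_eq)
  moreover have "\<not> b dvd z \<Longrightarrow> z \<noteq> 0" for z
    by (rule ccontr) simp
  ultimately show ?thesis
    unfolding Zset_def using assms(2) by auto
qed

lemma finite_Zset [simp]: "finite (Zset b m w)"
  by (simp add: Zset_def)

lemma one_in_Zset:
  assumes "prime b"
  shows "1 \<in> Zset b m w"
proof (cases "w < m")
  case True
  have "b ^ 1 \<le> b ^ (m - w)"
    using True prime_gt_1_nat[OF assms] by (intro power_increasing) auto
  then show ?thesis
    using True Zset_eq_non_multiples[OF assms True] prime_gt_1_nat[OF assms] by auto
qed (simp add: Zset_def)

text \<open>
  The value of \<open>\<Sum>\<^sub>z\<^sub>\<in>\<^sub>Z\<^sub>N\<^sub>,\<^sub>w e(D b\<^sup>w z / N)\<close>: the full sum over \<open>z < b\<^bsup>m-w\<^esup>\<close>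
  minus the sum over the multiples of \<open>b\<close>.
\<close>
definition Zset_char_sum :: "nat \<Rightarrow> nat \<Rightarrow> nat \<Rightarrow> int \<Rightarrow> real" where
  "Zset_char_sum b m w D = (if m \<le> w then 1 else
     of_bool (int (b ^ (m - w)) dvd D) * real (b ^ (m - w))
     - of_bool (int (b ^ (m - w - 1)) dvd D) * real (b ^ (m - w - 1)))"

lemma sum_Zset_cis2pi:
  assumes b: "prime b"
  shows "(\<Sum>z\<in>Zset b m w. cis2pi (of_int D * real (b ^ w * z) / real (b ^ m)))
    = of_real (Zset_char_sum b m w D)"
proof (cases "m \<le> w")
  case True
  have "b ^ w = b ^ m * b ^ (w - m)"
    using True by (simp flip: power_add)
  then have "of_int D * real (b ^ w) / real (b ^ m) = of_int (D * int (b ^ (w - m)))"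
    using b by (simp add: prime_gt_0_nat)
  then have "cis2pi (of_int D * real (b ^ w) / real (b ^ m)) = 1"
    by (simp only: cis2pi_of_int)
  then show ?thesis
    using True by (simp add: Zset_def Zset_char_sum_def)
next
  case False
  then have w: "w < m" by simp
  have b1: "b > 1" using b prime_gt_1_nat by blast
  define n' where "n' = b ^ (m - w - 1)"
  define n where "n = b * n'"
  have n_eq: "b ^ (m - w) = n"
    using w unfolding n_def n'_def by (simp flip: power_Suc add: Suc_diff_Suc)
  have n': "n' > 0" and n: "n > 0" using b1 by (simp_all add: n_def n'_def)
  have scale: "of_int D * real (b ^ w * z) / real (b ^ m) = real z * of_int D / real n" for z
  proof -
    have "b ^ m = b ^ w * n" using w by (simp flip: n_eq power_add)
    then show ?thesis using b1 by (simp add: field_simps)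
  qed
  have multiples: "{z \<in> {..<n}. b dvd z} = (\<lambda>z'. b * z') ` {..<n'}"
    using b1 by (auto simp: n_def elim!: dvdE)
  have "(\<Sum>z\<in>Zset b m w. cis2pi (of_int D * real (b ^ w * z) / real (b ^ m)))
      = (\<Sum>z<n. cis2pi (real z * of_int D / real n))
        - (\<Sum>z\<in>{z \<in> {..<n}. b dvd z}. cis2pi (real z * of_int D / real n))"
    unfolding scale Zset_eq_non_multiples[OF b w] n_eq by (subst sum_diff[symmetric]) (auto intro: sum.cong)
  also have "(\<Sum>z\<in>{z \<in> {..<n}. b dvd z}. cis2pi (real z * of_int D / real n))
      = (\<Sum>z'<n'. cis2pi (real z' * of_int D / real n'))"
    unfolding multiples using b1 by (subst sum.reindex) (auto simp: inj_on_def n_def)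
  also have "(\<Sum>z<n. cis2pi (real z * of_int D / real n)) - \<dots>
      = (if int n dvd D then of_nat n else 0) - (if int n' dvd D then of_nat n' else 0)"
    using n' b1 by (simp only: sum_cis2pi_roots_of_unity[OF n] sum_cis2pi_roots_of_unity[OF n'])
  also have "\<dots> = of_real (Zset_char_sum b m w D)"
    using w by (simp add: Zset_char_sum_def n'_def flip: n_eq)
  finally show ?thesis .
qed

lemma card_Zset:
  assumes "prime b"
  shows "real (card (Zset b m w)) = Zset_char_sum b m w 0"
proof -
  have "of_real (real (card (Zset b m w))) = (of_real (Zset_char_sum b m w 0) :: complex)"
    using sum_Zset_cis2pi[OF assms, where m = m and w = w and D = 0] by simp
  then show ?thesis by (simp only: of_real_eq_iff)
qed

lemma Zset_char_sum_0_pos: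
  assumes "prime b"
  shows "Zset_char_sum b m w 0 > 0"
proof -
  have "card (Zset b m w) > 0"
    using one_in_Zset[OF assms] by (auto simp: card_gt_0_iff)
  then show ?thesis by (simp flip: card_Zset[OF assms])
qed

text \<open>The sum over \<open>z \<in> Z\<^sub>N\<^sub>,\<^sub>w\<close> of the \<open>j\<close>-th factor in the character-sum expansion of \<open>R\<close> at \<open>k\<close>.\<close>
definition averaged_weight :: "nat \<Rightarrow> nat \<Rightarrow> (nat \<Rightarrow> real) \<Rightarrow> nat \<Rightarrow> nat \<Rightarrow> nat \<Rightarrow> real" where
  "averaged_weight b m \<gamma> j w k =
     (\<Sum>h\<in>centred_residues (b ^ m). weight_r \<gamma> j h * Zset_char_sum b m w (h * int k))"

lemma lattice_R_character_sum:
  assumes "N > 0" "finite I"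
  shows "of_real (lattice_R N I v \<gamma>) = 1 / of_nat N * (\<Sum>k<N. \<Prod>j\<in>I. \<Sum>h\<in>centred_residues N.
    of_real (weight_r \<gamma> j h) * cis2pi (of_int h * real k * real (v j) / real N))"
proof -
  have "of_real (lattice_R N I v \<gamma>) = (\<Sum>H\<in>PiE I (\<lambda>_. centred_residues N).
      of_bool (in_dual_lattice N I v H) * (\<Prod>j\<in>I. of_real (weight_r \<gamma> j (H j))) :: complex)"
    unfolding lattice_R_def of_real_sum by (intro sum.cong refl) (auto simp: of_real_prod)
  also have "\<dots> = 1 / of_nat N * (\<Sum>k<N. \<Prod>j\<in>I. \<Sum>h\<in>centred_residues N.
      of_real (weight_r \<gamma> j h) * cis2pi (of_int h * real k * real (v j) / real N))"
    by (rule sum_dual_lattice_eq_character_sum[OF assms])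
  finally show ?thesis .
qed

lemma sum_lattice_R_over_Zsets:
  assumes b: "prime b" and I: "finite I"
  shows "(\<Sum>zz\<in>PiE I (\<lambda>j. Zset b m (w j)). lattice_R (b ^ m) I (\<lambda>j. b ^ w j * zz j) \<gamma>)
    = 1 / real (b ^ m) * (\<Sum>k<b ^ m. \<Prod>j\<in>I. averaged_weight b m \<gamma> j (w j) k)"
proof -
  define N where "N = b ^ m"
  have N: "N > 0" unfolding N_def using b prime_gt_0_nat by simp
  define F where "F j k z = (\<Sum>h\<in>centred_residues N.
    of_real (weight_r \<gamma> j h) * cis2pi (of_int h * real k * real (b ^ w j * z) / real N))" for j k z
  have F: "(\<Sum>z\<in>Zset b m (w j). F j k z) = of_real (averaged_weight b m \<gamma> j (w j) k)" for j k
  proof -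
    have "(\<Sum>z\<in>Zset b m (w j). F j k z) = (\<Sum>h\<in>centred_residues N. of_real (weight_r \<gamma> j h)
        * (\<Sum>z\<in>Zset b m (w j). cis2pi (of_int (h * int k) * real (b ^ w j * z) / real N)))"
      unfolding F_def by (subst sum.swap) (simp add: sum_distrib_left)
    also have "\<dots> = (\<Sum>h\<in>centred_residues N. of_real (weight_r \<gamma> j h)
        * of_real (Zset_char_sum b m (w j) (h * int k)))"
      unfolding N_def by (simp only: sum_Zset_cis2pi[OF b])
    finally show ?thesis
      by (simp add: N_def averaged_weight_def of_real_sum)
  qed
  have "of_real (\<Sum>zz\<in>PiE I (\<lambda>j. Zset b m (w j)). lattice_R N I (\<lambda>j. b ^ w j * zz j) \<gamma>)
      = (\<Sum>zz\<in>PiE I (\<lambda>j. Zset b m (w j)). 1 / of_nat N * (\<Sum>k<N. \<Prod>j\<in>I. F j k (zz j)))"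
    unfolding of_real_sum F_def by (intro sum.cong refl lattice_R_character_sum[OF N I])
  also have "\<dots> = 1 / of_nat N * (\<Sum>k<N. \<Prod>j\<in>I. \<Sum>z\<in>Zset b m (w j). F j k z)"
    using I by (simp add: prod_sum_PiE sum_distrib_left) (subst sum.swap, rule refl)
  also have "\<dots> = of_real (1 / real N * (\<Sum>k<N. \<Prod>j\<in>I. averaged_weight b m \<gamma> j (w j) k))"
    by (simp add: F of_real_sum of_real_prod)
  finally show ?thesis
    unfolding N_def by (simp only: of_real_eq_iff)
qed

lemma sum_weight_r_multiples:
  assumes "d > 0" "n > 0"
  shows "(\<Sum>h\<in>centred_residues (d * n). weight_r \<gamma> j h * of_bool (int d dvd h))
    = 1 + \<gamma> j + \<gamma> j * S_N n / real d"
proof -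
  have "0 \<in> centred_residues (d * n)"
    using assms by (simp add: zero_in_centred_residues)
  then have "(\<Sum>h\<in>centred_residues (d * n). weight_r \<gamma> j h * of_bool (int d dvd h))
      = 1 + \<gamma> j + (\<Sum>h\<in>centred_residues (d * n) - {0}. weight_r \<gamma> j h * of_bool (int d dvd h))"
    by (simp add: sum.remove weight_r_def del: sum_mult_of_bool_eq)
  also have "(\<Sum>h\<in>centred_residues (d * n) - {0}. weight_r \<gamma> j h * of_bool (int d dvd h))
      = (\<Sum>h\<in>centred_residues (d * n) - {0}. if int d dvd h then \<gamma> j * (1 / real_of_int \<bar>h\<bar>) else 0)"
    by (intro sum.cong) (auto simp: weight_r_def)
  also have "\<dots> = \<gamma> j * (\<Sum>h\<in>{h \<in> centred_residues (d * n) - {0}. int d dvd h}. 1 / real_of_int \<bar>h\<bar>)"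
    by (simp add: sum_distrib_left flip: sum.inter_filter)
  also have "\<dots> = \<gamma> j * S_N n / real d"
    using sum_inverse_abs_centred_multiples[OF assms(1)] by simp
  finally show ?thesis by simp
qed

lemma averaged_weight_eq_full:
  assumes "prime b" and "m \<le> w \<or> int (b ^ (m - w)) dvd int k"
  shows "averaged_weight b m \<gamma> j w k = Zset_char_sum b m w 0 * (1 + \<gamma> j + \<gamma> j * S_N (b ^ m))"
proof -
  have "Zset_char_sum b m w (h * int k) = Zset_char_sum b m w 0" for h
  proof -
    have "int (b ^ (m - w - 1)) dvd int (b ^ (m - w))"
      by (simp add: le_imp_power_dvd)
    then show ?thesis
      using assms(2) by (auto simp: Zset_char_sum_def intro: dvd_mult dvd_trans)
  qed
  moreover have "b ^ m > 0"
    using assms(1) prime_gt_0_nat by simp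
  ultimately show ?thesis
    using sum_weight_r_multiples[of 1 "b ^ m" \<gamma> j]
    by (simp add: averaged_weight_def mult.commute flip: sum_distrib_left sum_distrib_right)
qed

lemma prime_power_dvd_mult_iff:
  fixes h :: int
  assumes "prime b" "\<not> b dvd k'" "p \<le> i"
  shows "int (b ^ i) dvd h * int (b ^ p * k') \<longleftrightarrow> int (b ^ (i - p)) dvd h"
proof -
  have coprime: "coprime (int (b ^ i)) (int k')"
    using prime_imp_power_coprime[OF assms(1,2), of i] by (simp add: coprime_commute)
  have "int (b ^ i) dvd h * int (b ^ p * k') \<longleftrightarrow> int (b ^ i) dvd (h * int (b ^ p)) * int k'"
    by (simp add: algebra_simps)
  also have "\<dots> \<longleftrightarrow> int (b ^ i) dvd h * int (b ^ p)"
    by (rule coprime_dvd_mult_left_iff[OF coprime])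
  also have "\<dots> \<longleftrightarrow> int (b ^ (i - p)) dvd h"
  proof -
    have "int (b ^ i) = int (b ^ (i - p)) * int (b ^ p)"
      using assms(3) by (simp flip: power_add)
    then show ?thesis
      using assms(1) by (simp add: prime_gt_0_nat)
  qed
  finally show ?thesis .
qed

lemma averaged_weight_eq_partial:
  assumes b: "prime b" and k: "k = b ^ p * k'" "\<not> b dvd k'" and p: "p < m - w"
  shows "averaged_weight b m \<gamma> j w k = (1 + \<gamma> j) * (real (b ^ (m - w)) - real (b ^ (m - w - 1)))
    - \<gamma> j * real (b ^ p) * (S_N (b ^ (w + p + 1)) - S_N (b ^ (w + p)))"
proof -
  define M where "M = m - w - p"
  have M: "M \<ge> 1" "m - w = p + M" "m - w - 1 = p + (M - 1)"
    using p by (auto simp: M_def)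
  have b0: "b > 0" using b prime_gt_0_nat by blast
  have char_sum: "Zset_char_sum b m w (h * int k)
      = real (b ^ (m - w)) * of_bool (int (b ^ M) dvd h)
        - real (b ^ (m - w - 1)) * of_bool (int (b ^ (M - 1)) dvd h)" for h
    using p prime_power_dvd_mult_iff[OF b k(2), of p "m - w" h] prime_power_dvd_mult_iff[OF b k(2), of p "m - w - 1" h]
    unfolding k(1) M_def by (simp add: Zset_char_sum_def)
  have sums: "(\<Sum>h\<in>centred_residues (b ^ m). weight_r \<gamma> j h * of_bool (int (b ^ i) dvd h))
      = 1 + \<gamma> j + \<gamma> j * S_N (b ^ (m - i)) / real (b ^ i)" if "i \<le> m" for i
    using sum_weight_r_multiples[of "b ^ i" "b ^ (m - i)" \<gamma> j] b0 that by (simp flip: power_add)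
  have "averaged_weight b m \<gamma> j w k
      = real (b ^ (m - w)) * (\<Sum>h\<in>centred_residues (b ^ m). weight_r \<gamma> j h * of_bool (int (b ^ M) dvd h))
        - real (b ^ (m - w - 1))
          * (\<Sum>h\<in>centred_residues (b ^ m). weight_r \<gamma> j h * of_bool (int (b ^ (M - 1)) dvd h))"
    unfolding averaged_weight_def char_sum
    by (simp add: right_diff_distrib sum_subtractf sum_distrib_left mult_ac del: sum_mult_of_bool_eq)
  also have "\<dots> = real (b ^ (m - w)) * (1 + \<gamma> j + \<gamma> j * S_N (b ^ (m - M)) / real (b ^ M))
        - real (b ^ (m - w - 1)) * (1 + \<gamma> j + \<gamma> j * S_N (b ^ (m - (M - 1))) / real (b ^ (M - 1)))"
  proof -
    have "M \<le> m" "M - 1 \<le> m" by (auto simp: M_def)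
    then show ?thesis by (simp only: sums)
  qed
  finally have U: "averaged_weight b m \<gamma> j w k
      = real (b ^ (m - w)) * (1 + \<gamma> j + \<gamma> j * S_N (b ^ (m - M)) / real (b ^ M))
        - real (b ^ (m - w - 1)) * (1 + \<gamma> j + \<gamma> j * S_N (b ^ (m - (M - 1))) / real (b ^ (M - 1)))" .
  define P A B where "P = real (b ^ p)" and "A = real (b ^ M)" and "B = real (b ^ (M - 1))"
  have XY: "real (b ^ (m - w)) = P * A" "real (b ^ (m - w - 1)) = P * B"
    unfolding P_def A_def B_def by (simp only: M(2) power_add of_nat_mult, simp only: M(3) power_add of_nat_mult)
  have exponents: "m - M = w + p" "m - (M - 1) = w + p + 1"
    using p by (simp_all add: M_def)
  have "P * A * (c + g * S1 / A) - P * B * (c + g * S2 / B) = c * (P * A - P * B) - g * P * (S2 - S1)"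
    for c g S1 S2 :: real
    using b0 by (simp add: A_def B_def field_simps)
  then show ?thesis
    unfolding U XY exponents A_def[symmetric] B_def[symmetric] P_def[symmetric] by simp
qed

lemma averaged_weight_partial_bounds:
  assumes b: "prime b" and k: "k = b ^ p * k'" "\<not> b dvd k'" and p: "p < m - w"
    and \<gamma>: "0 < \<gamma> j" "\<gamma> j \<le> 1"
  shows "0 \<le> averaged_weight b m \<gamma> j w k"
    and "averaged_weight b m \<gamma> j w k \<le> Zset_char_sum b m w 0 * (1 + \<gamma> j)"
proof -
  have b1: "b > 1" using b prime_gt_1_nat by blast
  define X Y where "X = real (b ^ (m - w))" and "Y = real (b ^ (m - w - 1))"
  define D where "D = S_N (b ^ (w + p + 1)) - S_N (b ^ (w + p))"
  have U: "averaged_weight b m \<gamma> j w k = (1 + \<gamma> j) * (X - Y) - \<gamma> j * real (b ^ p) * D"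
    unfolding X_def Y_def D_def by (rule averaged_weight_eq_partial[OF b k p])
  have W0: "Zset_char_sum b m w 0 = X - Y"
    using p by (simp add: Zset_char_sum_def X_def Y_def)
  have D: "0 \<le> D" "D \<le> 2 * (real b - 1)"
    unfolding D_def using S_N_mono[of "b ^ (w + p)" "b ^ (w + p + 1)"] S_N_mult_diff_le[of b "b ^ (w + p)"] b1
    by simp_all
  have XY: "real (b ^ p) * (real b - 1) \<le> X - Y"
  proof -
    have "X = real b * Y"
      using p unfolding X_def Y_def by (simp flip: power_Suc add: Suc_diff_Suc)
    then have "X - Y = Y * (real b - 1)"
      by (simp add: algebra_simps)
    moreover have "real (b ^ p) \<le> Y"
      unfolding Y_def using p b1 by (simp add: power_increasing)
    ultimately show ?thesis using b1 by (simp add: mult_right_mono)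
  qed
  have "\<gamma> j * real (b ^ p) * D \<le> \<gamma> j * (real (b ^ p) * (2 * (real b - 1)))"
    using D \<gamma> by (simp add: mult_left_mono)
  also have "\<dots> = 2 * \<gamma> j * (real (b ^ p) * (real b - 1))"
    by (simp add: algebra_simps)
  also have "\<dots> \<le> 2 * \<gamma> j * (X - Y)"
    using \<gamma> by (intro mult_left_mono[OF XY]) simp
  finally have "\<gamma> j * real (b ^ p) * D \<le> 2 * \<gamma> j * (X - Y)" .
  moreover have "0 \<le> real (b ^ p) * (real b - 1)"
    using b1 by simp
  then have "0 \<le> (1 - \<gamma> j) * (X - Y)"
    using XY \<gamma> by (intro mult_nonneg_nonneg) auto
  ultimately show "0 \<le> averaged_weight b m \<gamma> j w k"
    unfolding U by (simp add: algebra_simps)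
  show "averaged_weight b m \<gamma> j w k \<le> Zset_char_sum b m w 0 * (1 + \<gamma> j)"
    unfolding U W0 using D \<gamma> by (simp add: mult.commute)
qed

lemma averaged_weight_ratio_bounds:
  assumes b: "prime b" and k: "k > 0" and \<gamma>: "0 < \<gamma> j" "\<gamma> j \<le> 1"
  shows "0 \<le> averaged_weight b m \<gamma> j w k / Zset_char_sum b m w 0"
    and "averaged_weight b m \<gamma> j w k / Zset_char_sum b m w 0
      \<le> (if m - multiplicity b k \<le> w then 1 + \<gamma> j + \<gamma> j * S_N (b ^ m) else 1 + \<gamma> j)"
proof -
  define p where "p = multiplicity b k"
  have not_unit: "\<not> is_unit b" using b not_prime_unit by blast
  obtain k' where k': "k = b ^ p * k'" "\<not> b dvd k'"
    using multiplicity_decompose'[of k b] k not_unit unfolding p_def by auto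
  have W0: "Zset_char_sum b m w 0 > 0" by (rule Zset_char_sum_0_pos[OF b])
  have "0 \<le> averaged_weight b m \<gamma> j w k / Zset_char_sum b m w 0
    \<and> averaged_weight b m \<gamma> j w k / Zset_char_sum b m w 0
      \<le> (if m - p \<le> w then 1 + \<gamma> j + \<gamma> j * S_N (b ^ m) else 1 + \<gamma> j)"
  proof (cases "m - p \<le> w")
    case True
    have "m \<le> w \<or> int (b ^ (m - w)) dvd int k"
      using True k'(1) by (auto simp: le_imp_power_dvd dvd_mult2 simp flip: of_nat_dvd_iff)
    then have "averaged_weight b m \<gamma> j w k / Zset_char_sum b m w 0 = 1 + \<gamma> j + \<gamma> j * S_N (b ^ m)"
      using W0 by (simp add: averaged_weight_eq_full[OF b])
    then show ?thesis
      using True \<gamma> S_N_nonneg[of "b ^ m"] by simp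
  next
    case False
    then have p: "p < m - w" by simp
    show ?thesis
      using averaged_weight_partial_bounds[where \<gamma> = \<gamma> and j = j, OF b k' p \<gamma>] W0 False
      by (simp add: divide_le_eq mult.commute)
  qed
  then show "0 \<le> averaged_weight b m \<gamma> j w k / Zset_char_sum b m w 0"
    and "averaged_weight b m \<gamma> j w k / Zset_char_sum b m w 0
      \<le> (if m - multiplicity b k \<le> w then 1 + \<gamma> j + \<gamma> j * S_N (b ^ m) else 1 + \<gamma> j)"
    by (simp_all add: p_def)
qed

lemma multiplicity_less_exponent:
  fixes b k m :: nat
  assumes "prime b" "k \<in> {1..<b ^ m}"
  shows "multiplicity b k < m"
proof -
  have "b ^ multiplicity b k \<le> k"
    using assms(2) by (intro dvd_imp_le multiplicity_dvd) auto
  then have "b ^ multiplicity b k < b ^ m" using assms(2) by simp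
  then show ?thesis using assms(1) prime_gt_1_nat by (simp add: power_strict_increasing_iff)
qed

lemma card_multiples_below:
  fixes d n :: nat
  assumes "d > 0" "d dvd n"
  shows "card {k \<in> {1..<n}. d dvd k} = n div d - 1"
proof -
  have "{k \<in> {1..<n}. d dvd k} = (\<lambda>t. d * t) ` {1..<n div d}"
  proof (intro equalityI subsetI)
    fix k assume "k \<in> {k \<in> {1..<n}. d dvd k}"
    then obtain t where "k = d * t" "1 \<le> d * t" "d * t < n" by auto
    moreover from this have "t \<ge> 1" "t < n div d"
      using assms by (auto intro: Nat.gr0I)
    ultimately show "k \<in> (\<lambda>t. d * t) ` {1..<n div d}" by auto
  next
    fix k assume "k \<in> (\<lambda>t. d * t) ` {1..<n div d}"
    then obtain t where "k = d * t" "1 \<le> t" "t < n div d" by (elim imageE) auto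
    moreover from this have "d * t < n"
      using assms by (metis dvd_mult_div_cancel mult_less_cancel1)
    ultimately show "k \<in> {k \<in> {1..<n}. d dvd k}"
      using assms(1) by (auto simp: Suc_le_eq)
  qed
  moreover have "inj_on (\<lambda>t. d * t) {1..<n div d}"
    using assms(1) by (auto simp: inj_on_def)
  ultimately show ?thesis by (simp add: card_image)
qed

lemma card_multiplicity_eq:
  fixes b m p :: nat
  assumes b: "prime b" and p: "p < m"
  shows "card {k \<in> {1..<b ^ m}. multiplicity b k = p} = b ^ (m - p) - b ^ (m - p - 1)"
proof -
  have b1: "b > 1" using b prime_gt_1_nat by blast
  define A where "A = {k \<in> {1..<b ^ m}. b ^ p dvd k}"
  define B where "B = {k \<in> {1..<b ^ m}. b ^ Suc p dvd k}"
  have not_unit: "\<not> is_unit b" using b not_prime_unit by blast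
  have "{k \<in> {1..<b ^ m}. multiplicity b k = p} = A - B"
  proof (rule set_eqI)
    fix k
    show "k \<in> {k \<in> {1..<b ^ m}. multiplicity b k = p} \<longleftrightarrow> k \<in> A - B"
    proof (cases "k \<in> {1..<b ^ m}")
      case True
      then have "k \<noteq> 0" by auto
      then show ?thesis
        using True power_dvd_iff_le_multiplicity[OF _ not_unit, of k p]
          power_dvd_iff_le_multiplicity[OF _ not_unit, of k "Suc p"]
        by (auto simp: A_def B_def)
    qed (auto simp: A_def B_def)
  qed
  moreover have "B \<subseteq> A"
    unfolding A_def B_def by (auto intro: dvd_trans[OF le_imp_power_dvd[of p "Suc p"]])
  moreover have "card A = b ^ (m - p) - 1"
  proof -
    have "b ^ m = b ^ p * b ^ (m - p)" using p by (simp flip: power_add)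
    then have "b ^ p dvd b ^ m" "b ^ m div b ^ p = b ^ (m - p)" using b1 by auto
    then show ?thesis unfolding A_def using card_multiples_below[of "b ^ p" "b ^ m"] b1 by simp
  qed
  moreover have "card B = b ^ (m - p - 1) - 1"
  proof -
    have "Suc p + (m - p - 1) = m" using p by simp
    then have "b ^ m = b ^ Suc p * b ^ (m - p - 1)" by (metis power_add)
    then have "b ^ Suc p dvd b ^ m" "b ^ m div b ^ Suc p = b ^ (m - p - 1)"
      using b1 by (auto simp del: power_Suc)
    then show ?thesis
      unfolding B_def using card_multiples_below[of "b ^ Suc p" "b ^ m"] b1 by (simp del: power_Suc)
  qed
  moreover have "b ^ (m - p - 1) \<ge> 1" using b1 by simp
  ultimately show ?thesis
    by (simp add: card_Diff_subset finite_subset[of B A] A_def)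
qed

definition lattice_R_average_bound ::
    "nat \<Rightarrow> nat \<Rightarrow> (nat \<Rightarrow> real) \<Rightarrow> (nat \<Rightarrow> nat) \<Rightarrow> nat set \<Rightarrow> real" where
  "lattice_R_average_bound b m \<gamma> w I = (\<Prod>j\<in>I. (1 + \<gamma> j) + \<gamma> j * S_N (b ^ m))
      + (\<Sum>p\<in>{0..<m}. real (b ^ (m - p - 1)) * (real b - 1)
          * (\<Prod>j\<in>{j\<in>I. w j \<ge> m - p}. (1 + \<gamma> j) + \<gamma> j * S_N (b ^ m))
          * (\<Prod>j\<in>{j\<in>I. w j < m - p}. 1 + \<gamma> j))"

lemma sum_prod_averaged_weight_ratio_le:
  assumes b: "prime b" and I: "finite I" and \<gamma>: "\<And>j. j \<in> I \<Longrightarrow> 0 < \<gamma> j \<and> \<gamma> j \<le> 1"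
  shows "(\<Sum>k<b ^ m. \<Prod>j\<in>I. averaged_weight b m \<gamma> j (w j) k / Zset_char_sum b m (w j) 0)
    \<le> lattice_R_average_bound b m \<gamma> w I"
proof -
  have b1: "b > 1" using b prime_gt_1_nat by blast
  define A where "A j k = averaged_weight b m \<gamma> j (w j) k / Zset_char_sum b m (w j) 0" for j k
  define c where "c j = (1 + \<gamma> j) + \<gamma> j * S_N (b ^ m)" for j
  define B where "B p = (\<Prod>j\<in>{j\<in>I. w j \<ge> m - p}. c j) * (\<Prod>j\<in>{j\<in>I. w j < m - p}. 1 + \<gamma> j)" for p
  have B: "B p = (\<Prod>j\<in>I. if m - p \<le> w j then c j else 1 + \<gamma> j)" for p
    unfolding B_def using I by (simp add: prod.If_cases Int_def not_le)
  have A0: "A j 0 = c j" for j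
    using averaged_weight_eq_full[OF b, of m "w j" 0 \<gamma> j] Zset_char_sum_0_pos[OF b, of m "w j"]
    by (simp add: A_def c_def)
  have Ak: "(\<Prod>j\<in>I. A j k) \<le> B (multiplicity b k)" if "k \<in> {1..<b ^ m}" for k
    unfolding B A_def c_def using that averaged_weight_ratio_bounds[OF b] \<gamma>
    by (intro prod_mono) (auto simp del: of_nat_add)
  have "{..<b ^ m} = insert 0 {1..<b ^ m}" using b1 by auto
  then have "(\<Sum>k<b ^ m. \<Prod>j\<in>I. A j k) = (\<Prod>j\<in>I. c j) + (\<Sum>k\<in>{1..<b ^ m}. \<Prod>j\<in>I. A j k)"
    by (simp add: A0)
  also have "\<dots> \<le> (\<Prod>j\<in>I. c j) + (\<Sum>k\<in>{1..<b ^ m}. B (multiplicity b k))"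
    by (intro add_left_mono sum_mono Ak)
  also have "(\<Sum>k\<in>{1..<b ^ m}. B (multiplicity b k))
      = (\<Sum>p\<in>{0..<m}. \<Sum>k\<in>{k \<in> {1..<b ^ m}. multiplicity b k = p}. B p)"
    by (subst sum.group[symmetric, where g = "multiplicity b"])
      (use multiplicity_less_exponent[OF b] in \<open>auto intro: sum.cong\<close>)
  also have "\<dots> = (\<Sum>p\<in>{0..<m}. real (b ^ (m - p - 1)) * (real b - 1) * B p)"
  proof (rule sum.cong[OF refl])
    fix p assume "p \<in> {0..<m}"
    then have "m - p = Suc (m - p - 1)" by simp
    then have "b ^ (m - p) = b * b ^ (m - p - 1)" by (metis power_Suc)
    then have "real (b ^ (m - p) - b ^ (m - p - 1)) = real (b ^ (m - p - 1)) * (real b - 1)"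
      using b1 by (simp add: of_nat_diff algebra_simps)
    then show "(\<Sum>k\<in>{k \<in> {1..<b ^ m}. multiplicity b k = p}. B p) = real (b ^ (m - p - 1)) * (real b - 1) * B p"
      using card_multiplicity_eq[OF b] \<open>p \<in> {0..<m}\<close> by simp
  qed
  finally show ?thesis
    unfolding lattice_R_average_bound_def A_def B_def c_def by (simp add: mult.assoc)
qed

lemma weighted_star_discr_le_lattice_R:
  assumes N: "N > 0" and s: "s \<ge> 1" and \<gamma>: "\<And>j. j \<in> {1..s} \<Longrightarrow> 0 < \<gamma> j \<and> \<gamma> j \<le> 1"
  shows "weighted_star_discr N s \<gamma> v
    \<le> (\<Sum>u\<in>Pow {1..s}. prod_weight \<gamma> u * (1 - (1 - 1 / real N) ^ card u))
      + 1 / 2 * (lattice_R N {1..s} v \<gamma> - (\<Prod>j\<in>{1..s}. 1 + \<gamma> j))"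
proof (rule weighted_star_discr_le[OF s])
  fix x :: "nat \<Rightarrow> real" and u
  assume x: "\<forall>j\<in>{1..s}. 0 < x j \<and> x j \<le> 1" and u: "u \<subseteq> {1..s}"
  have "prod_weight \<gamma> u * (1 - (1 - 1 / real N) ^ card u)
      \<le> (\<Sum>u\<in>Pow {1..s}. prod_weight \<gamma> u * (1 - (1 - 1 / real N) ^ card u))"
  proof (rule member_le_sum)
    fix u' assume "u' \<in> Pow {1..s} - {u}"
    then have "0 \<le> prod_weight \<gamma> u'"
      using \<gamma> by (intro prod_weight_nonneg) (auto simp: less_imp_le)
    moreover have "(1 - 1 / real N) ^ card u' \<le> 1"
      using N by (intro power_le_one) (auto simp: field_simps)
    ultimately show "0 \<le> prod_weight \<gamma> u' * (1 - (1 - 1 / real N) ^ card u')" by simp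
  qed (use u in auto)
  then show "prod_weight \<gamma> u * \<bar>discr N s v (\<lambda>j. if j \<in> u then x j else 1)\<bar>
      \<le> (\<Sum>u\<in>Pow {1..s}. prod_weight \<gamma> u * (1 - (1 - 1 / real N) ^ card u))
        + 1 / 2 * (lattice_R N {1..s} v \<gamma> - (\<Prod>j\<in>{1..s}. 1 + \<gamma> j))"
    using weighted_local_discr_le[where \<gamma> = \<gamma> and x = x and v = v, OF N u \<gamma>] x by simp
qed

lemma exists_generating_vector_lattice_R_le:
  assumes b: "prime b" and I: "finite I" and \<gamma>: "\<And>j. j \<in> I \<Longrightarrow> 0 < \<gamma> j \<and> \<gamma> j \<le> 1"
  obtains zz where "zz \<in> PiE I (\<lambda>j. Zset b m (w j))"
    and "lattice_R (b ^ m) I (\<lambda>j. b ^ w j * zz j) \<gamma>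
      \<le> 1 / real (b ^ m) * lattice_R_average_bound b m \<gamma> w I"
proof -
  define Z where "Z = PiE I (\<lambda>j. Zset b m (w j))"
  have "finite Z" "Z \<noteq> {}"
    using I one_in_Zset[OF b] by (auto simp: Z_def finite_PiE PiE_eq_empty_iff)
  then obtain zz where zz: "zz \<in> Z" and le_average:
    "lattice_R (b ^ m) I (\<lambda>j. b ^ w j * zz j) \<gamma>
      \<le> (\<Sum>zz\<in>Z. lattice_R (b ^ m) I (\<lambda>j. b ^ w j * zz j) \<gamma>) / real (card Z)"
    by (rule exists_le_average)
  have "real (card Z) = (\<Prod>j\<in>I. Zset_char_sum b m (w j) 0)"
    unfolding Z_def using I by (simp add: card_PiE card_Zset[OF b])
  then have "(\<Sum>zz\<in>Z. lattice_R (b ^ m) I (\<lambda>j. b ^ w j * zz j) \<gamma>) / real (card Z)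
      = 1 / real (b ^ m) * (\<Sum>k<b ^ m. \<Prod>j\<in>I. averaged_weight b m \<gamma> j (w j) k / Zset_char_sum b m (w j) 0)"
    unfolding Z_def sum_lattice_R_over_Zsets[OF b I]
    by (simp add: sum_divide_distrib prod_dividef mult.commute)
  also have "\<dots> \<le> 1 / real (b ^ m) * lattice_R_average_bound b m \<gamma> w I"
    using sum_prod_averaged_weight_ratio_le[OF b I \<gamma>] by (simp add: divide_right_mono)
  finally show ?thesis
    using that zz le_average unfolding Z_def by simp
qed

theorem theorem1:
  fixes b m s :: nat and \<gamma> :: "nat \<Rightarrow> real" and w :: "nat \<Rightarrow> nat"
  assumes "prime b" and "m \<ge> 5" and "s \<ge> 1"
    and "\<And>j. j \<ge> 1 \<Longrightarrow> 0 < \<gamma> j \<and> \<gamma> j \<le> 1"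
    and "\<And>i j. 1 \<le> i \<Longrightarrow> i \<le> j \<Longrightarrow> \<gamma> j \<le> \<gamma> i"
    and "\<And>i j. 1 \<le> i \<Longrightarrow> i \<le> j \<Longrightarrow> w i \<le> w j"
  shows "\<exists>zz :: nat \<Rightarrow> nat. (\<forall>j\<in>{1..s}. zz j \<in> Zset b m (w j)) \<and>
    weighted_star_discr (b ^ m) s \<gamma> (\<lambda>j. b ^ (w j) * zz j)
    \<le> (\<Sum>u\<in>Pow {1..s}. prod_weight \<gamma> u * (1 - (1 - 1 / real (b ^ m)) ^ card u))
       + 1 / 2 * ( 1 / real (b ^ m) * (\<Prod>j\<in>{1..s}. (1 + \<gamma> j) + \<gamma> j * S_N (b ^ m))
         + 1 / real (b ^ m) * (\<Sum>p\<in>{0..<m}. real (b ^ (m - p - 1)) * (real b - 1)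
              * (\<Prod>j\<in>{j\<in>{1..s}. w j \<ge> m - p}. (1 + \<gamma> j) + \<gamma> j * S_N (b ^ m))
              * (\<Prod>j\<in>{j\<in>{1..s}. w j < m - p}. 1 + \<gamma> j))
         - (\<Prod>j\<in>{1..s}. 1 + \<gamma> j))"
proof -
  have b: "b > 1" using assms(1) prime_gt_1_nat by blast
  have \<gamma>: "\<And>j. j \<in> {1..s} \<Longrightarrow> 0 < \<gamma> j \<and> \<gamma> j \<le> 1"
    using assms(4) by simp
  obtain zz where zz: "zz \<in> PiE {1..s} (\<lambda>j. Zset b m (w j))"
    and R: "lattice_R (b ^ m) {1..s} (\<lambda>j. b ^ w j * zz j) \<gamma>
      \<le> 1 / real (b ^ m) * lattice_R_average_bound b m \<gamma> w {1..s}"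
    using exists_generating_vector_lattice_R_le[where \<gamma> = \<gamma>, OF assms(1) finite_atLeastAtMost \<gamma>] by blast
  have discrepancy: "weighted_star_discr (b ^ m) s \<gamma> (\<lambda>j. b ^ w j * zz j)
    \<le> (\<Sum>u\<in>Pow {1..s}. prod_weight \<gamma> u * (1 - (1 - 1 / real (b ^ m)) ^ card u))
      + 1 / 2 * (lattice_R (b ^ m) {1..s} (\<lambda>j. b ^ w j * zz j) \<gamma> - (\<Prod>j\<in>{1..s}. 1 + \<gamma> j))"
    using b by (intro weighted_star_discr_le_lattice_R assms(3) \<gamma>) simp
  show ?thesis
    using zz by (intro exI[of _ zz] conjI order_trans[OF discrepancy] add_left_mono mult_left_mono
        diff_right_mono R[unfolded lattice_R_average_bound_def distrib_left]) auto
qed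

end
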